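(* For $k$ sufficiently large and every $\ell\in\mathbb Z/D\mathbb Z$, $\gamma^-_{-\ell}=-\gamma^+_\ell$.
   Context: Standing setup. $(E,\omega)$ is a real $2$-dimensional symplectic vector space with a compatible linear complex structure $j$; $K_j=\{\alpha\in E^*\otimes\mathbb C:\alpha(j\cdot)=i\alpha\}$. A half-form line is a complex line $\delta$ with an isomorphism $\varphi:\delta^{\otimes2}\to K_j$; $\delta$ carries the Hermitian metric making $\varphi$ an isometry. For $v\in E\setminus\{0\}$, $\Omega_v$ denotes a vector of $\delta$ with $\varphi(\Omega_v^2)(v)=1$ (unique up to sign). $L\to E$ is the trivial Hermitian line bundle with connection $d-i\alpha$, where $\alpha_x(y)=\frac12\omega(x,y)$, and the compatible holomorphic structure; sections of $L^k\otimes\delta$ are identified with functions $E\to\delta$. For $k\in\mathbb Z_{>0}$ and $x\in E$, $T^*_x$ acts on sections of $L^k\otimes\delta$ by $(T^*_x\Psi)(y)=e^{-\frac{ik}{2}\omega(x,y)}\Psi(x+y)$. For a lattice $\Lambda\subset E$, $\mathcal H^\Lambda_k$ is the space of holomorphic sections $\Psi$ of $L^k\otimes\delta$ with $T^*_x\Psi=\Psi$ for all $x\in\Lambda$, with inner product $\langle\Psi_1,\Psi_2\rangle=\int_F\langle\Psi_1,\Psi_2\rangle_\delta\,|\omega|$ ($F$ a fundamental domain of $\Lambda$). For sequences, $O(k^{-\infty})$ means $O(k^{-N})$ for every $N$. Knot state. Fix relatively prime positive integers $a,b$; $D=2ab$. Fix a basis $(\lambda,\mu)$ of $E$ with $\omega(\mu,\lambda)=4\pi$.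 $\mathcal H_k=\mathcal H_k^{\lambda\mathbb Z\oplus\mu\mathbb Z}$; $M=T^*_{\mu/2k}$, $L=T^*_{-\lambda/2k}$ (operators), $q=e^{i\pi/k}$, $q^{s/D}=e^{i\pi s/(kD)}$. Fix $\Omega_\mu$; $(\xi_\ell)_{\ell\in\mathbb Z/2k\mathbb Z}$ is the orthonormal basis of $\mathcal H_k$ with $M\xi_\ell=q^\ell\xi_\ell$, $L\xi_\ell=\xi_{\ell-1}$, $\xi_0(0)\in\mathbb R_{>0}\Omega_\mu$. For $\ell\ge1$, $J_\ell(t)=\frac{t^{ab(1-\ell^2)}}{t^2-t^{-2}}\sum_{r}t^{4abr^2}\bigl(t^{-4(a+b)r+2}-t^{-4(a-b)r-2}\bigr)$, $r$ running over $-\frac{\ell-1}2,-\frac{\ell-1}2+1,\dots,\frac{\ell-1}2$ (colored Jones polynomials of the $(a,b)$ torus knot); $J_0=0$, $J_{-\ell}=-J_\ell$; $\ell\mapsto J_\ell(-e^{i\pi/2k})$ is $2k$-periodic. The knot state is $Z_k=\frac{\sin(\pi/k)}{\sqrt k}\sum_{\ell\in\mathbb Z/2k\mathbb Z}J_\ell(-e^{i\pi/2k})\xi_\ell$, and $Z^0_k=-\frac{i}{2\sqrt k}\sum_{\ell\in\mathbb Z/2k\mathbb Z}\xi_\ell$. Second lattice. $\Omega_\lambda$ is the (fixed, $k$-independent) choice of sign with $Z^0_k(0)=\frac{e^{3i\pi/4}}{\sqrt2}(\frac{k}{2\pi})^{1/4}\Omega_\lambda+O(k^{-\infty})$. $R_D=D\mu\mathbb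 Z\oplus\lambda\mathbb Z$, $\mathcal H_{D,k}=\mathcal H_k^{R_D}\supset\mathcal H_k$ ($\dim=2kD$). $S=T^*_{-\lambda/2kD}$, $R=T^*_{(D\mu-2\lambda)/2kD}$. $(\Psi_n)_{n\in\mathbb Z/2kD\mathbb Z}$ is the orthonormal basis of $\mathcal H_{D,k}$ with $S\Psi_n=q^{n/D}\Psi_n$, $R\Psi_n=\Psi_{n+1}$ and phase such that $\Psi_0(0)=e^{i\pi/4}(\frac k{2\pi})^{1/4}\Omega_\lambda+O(k^{-\infty})$. $\Phi_\ell=\frac1{\sqrt{2kD}}\sum_{n\in\mathbb Z/2kD\mathbb Z}e^{2i\pi n\ell/D}\Psi_n$ ($\ell\in\mathbb Z/D\mathbb Z$). $E_{k,+}$ (resp. $E_{k,-}$) is the span of the $\Psi_n$ with $-ab+a+b\le n<2k-ab-a-b$ (resp. $-2k-ab+a+b\le n<-ab-a-b$); $\perp$ is the orthogonal complement in $\mathcal H_{D,k}$. For $k$ large, $\gamma^\pm_\ell$ ($\ell\in\mathbb Z/D\mathbb Z$) are the unique complex numbers with $Z_k-\sum_\ell\gamma^\pm_\ell\Phi_\ell\in E_{k,\pm}^\perp$. *)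

theory Defs
  imports "HOL-Analysis.Analysis"
begin

text \<open>E is the complex plane (type complex, viewed as a
real 2-dimensional space) with j = multiplication by i and the symplectic form
omg x y = Im (cnj x * y), which is compatible with j.  Every (E, omega, j) as in the
paper is linearly isomorphic to this model, and the lattice basis (lam, mu) is
arbitrary subject to omg mu lam = 4 pi.

K_j = complex-linear forms on E = {z |-> c z}; its Hermitian metric is the one induced
by the compatible metric g = omega(., j .): |alpha|^2 = |alpha(1)|^2 + |alpha(i)|^2, so
|c dz|^2 = 2 |c|^2.  The half-form line is delta = C with phi(u (x) u) = u^2 dz; the
metric making phi an isometry is <u,v>_delta = sqrt 2 * u * cnj v.  A vector Omega_v of
delta with phi(Omega_v^2)(v) = 1 is a complex number with Omega_v^2 * v = 1.\<close>

definition omg :: "complex \<Rightarrow> complex \<Rightarrow> real" where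
  "omg x y = Im (cnj x * y)"

definition Tstar :: "nat \<Rightarrow> complex \<Rightarrow> (complex \<Rightarrow> complex) \<Rightarrow> complex \<Rightarrow> complex" where
  "Tstar k x \<Psi> = (\<lambda>y. exp (- \<i> * complex_of_real (real k / 2 * omg x y)) * \<Psi> (x + y))"

text \<open>Covariant derivative of a section of L^k (x) delta for the connection d - i k alpha,
alpha_y(v) = omega(y,v)/2.\<close>
definition cov_der :: "nat \<Rightarrow> (complex \<Rightarrow> complex) \<Rightarrow> complex \<Rightarrow> complex \<Rightarrow> complex" where
  "cov_der k \<Psi> y v = frechet_derivative \<Psi> (at y) v
      - \<i> * complex_of_real (real k * omg y v / 2) * \<Psi> y"

text \<open>Holomorphic sections for the compatible holomorphic structure: nabla^(0,1) = 0,
i.e. nabla_(j v) = i nabla_v.\<close>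
definition holo_sec :: "nat \<Rightarrow> (complex \<Rightarrow> complex) \<Rightarrow> bool" where
  "holo_sec k \<Psi> \<longleftrightarrow> (\<forall>y. \<Psi> differentiable (at y))
      \<and> (\<forall>y v. cov_der k \<Psi> y (\<i> * v) = \<i> * cov_der k \<Psi> y v)"

definition delta_inner :: "complex \<Rightarrow> complex \<Rightarrow> complex" where
  "delta_inner u v = complex_of_real (sqrt 2) * u * cnj v"

definition is_Omega :: "complex \<Rightarrow> complex \<Rightarrow> bool" where
  "is_Omega v \<Omega> \<longleftrightarrow> \<Omega>\<^sup>2 * v = 1"

definition lattice :: "complex \<Rightarrow> complex \<Rightarrow> complex set" where
  "lattice u v = {of_int m * u + of_int n * v | m n. True}"

definition fund_dom :: "complex \<Rightarrow> complex \<Rightarrow> complex set" where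
  "fund_dom u v = {complex_of_real s * u + complex_of_real t * v | s t.
       0 \<le> s \<and> s < 1 \<and> 0 \<le> t \<and> t < 1}"

definition sec_space :: "nat \<Rightarrow> complex \<Rightarrow> complex \<Rightarrow> (complex \<Rightarrow> complex) set" where
  "sec_space k u v = {\<Psi>. holo_sec k \<Psi> \<and> (\<forall>x\<in>lattice u v. Tstar k x \<Psi> = \<Psi>)}"

definition sec_inner :: "complex \<Rightarrow> complex \<Rightarrow> (complex \<Rightarrow> complex) \<Rightarrow> (complex \<Rightarrow> complex) \<Rightarrow> complex" where
  "sec_inner u v \<Psi>1 \<Psi>2 = (LINT z : fund_dom u v | lborel. delta_inner (\<Psi>1 z) (\<Psi>2 z))"

text \<open>An orthonormal basis of V indexed by Z/NZ (represented as an N-periodic family on int).\<close>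
definition onb_family :: "(complex \<Rightarrow> complex) set \<Rightarrow>
    ((complex \<Rightarrow> complex) \<Rightarrow> (complex \<Rightarrow> complex) \<Rightarrow> complex) \<Rightarrow> nat \<Rightarrow>
    (int \<Rightarrow> complex \<Rightarrow> complex) \<Rightarrow> bool" where
  "onb_family V ip N e \<longleftrightarrow> (\<forall>i. e (i + int N) = e i) \<and> (\<forall>i. e i \<in> V)
     \<and> (\<forall>i\<in>{0..<int N}. \<forall>j\<in>{0..<int N}. ip (e i) (e j) = (if i = j then 1 else 0))
     \<and> (\<forall>\<Psi>\<in>V. \<exists>c. \<Psi> = (\<lambda>z. \<Sum>i\<in>{0..<int N}. c i * e i z))"

definition neg_k_infty :: "(nat \<Rightarrow> complex) \<Rightarrow> bool" where
  "neg_k_infty f \<longleftrightarrow> (\<forall>N::nat. \<exists>C K. \<forall>k\<ge>K. norm (f k) \<le> C * real k powr (- real N))"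

text \<open>Colored Jones polynomials of the (a,b) torus knot; r = s/2 with
s = 2j - l + 1, j = 0..l-1.\<close>
definition jones_pos :: "nat \<Rightarrow> nat \<Rightarrow> nat \<Rightarrow> complex \<Rightarrow> complex" where
  "jones_pos a b l t = t powi (int (a*b) * (1 - (int l)\<^sup>2)) / (t\<^sup>2 - t powi (-2)) *
     (\<Sum>j<l. let s = 2 * int j - int l + 1 in
        t powi (int (a*b) * s\<^sup>2) *
        (t powi (- 2 * (int a + int b) * s + 2) - t powi (- 2 * (int a - int b) * s - 2)))"

definition jones :: "nat \<Rightarrow> nat \<Rightarrow> int \<Rightarrow> complex \<Rightarrow> complex" where
  "jones a b l t = (if l > 0 then jones_pos a b (nat l) t
                    else if l = 0 then 0 else - jones_pos a b (nat (- l)) t)"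

definition xi_basis :: "complex \<Rightarrow> complex \<Rightarrow> complex \<Rightarrow> nat \<Rightarrow> (int \<Rightarrow> complex \<Rightarrow> complex) \<Rightarrow> bool" where
  "xi_basis lam mu Om_mu k \<xi> \<longleftrightarrow>
     onb_family (sec_space k lam mu) (sec_inner lam mu) (2 * k) \<xi>
     \<and> (\<forall>l. Tstar k (mu / of_nat (2 * k)) (\<xi> l)
              = (\<lambda>z. exp (\<i> * of_real pi * of_int l / of_nat k) * \<xi> l z))
     \<and> (\<forall>l. Tstar k (- lam / of_nat (2 * k)) (\<xi> l) = \<xi> (l - 1))
     \<and> (\<exists>r>0. \<xi> 0 0 = complex_of_real r * Om_mu)"

definition knot_state :: "nat \<Rightarrow> nat \<Rightarrow> nat \<Rightarrow> (int \<Rightarrow> complex \<Rightarrow> complex) \<Rightarrow> complex \<Rightarrow> complex" where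
  "knot_state a b k \<xi> = (\<lambda>z. complex_of_real (sin (pi / real k) / sqrt (real k)) *
      (\<Sum>l\<in>{0..<2 * int k}. jones a b l (- exp (\<i> * of_real pi / of_nat (2 * k))) * \<xi> l z))"

definition knot_state0 :: "nat \<Rightarrow> (int \<Rightarrow> complex \<Rightarrow> complex) \<Rightarrow> complex \<Rightarrow> complex" where
  "knot_state0 k \<xi> = (\<lambda>z. - \<i> / (2 * complex_of_real (sqrt (real k))) *
      (\<Sum>l\<in>{0..<2 * int k}. \<xi> l z))"

definition psi_basis :: "nat \<Rightarrow> complex \<Rightarrow> complex \<Rightarrow> nat \<Rightarrow> (int \<Rightarrow> complex \<Rightarrow> complex) \<Rightarrow> bool" where
  "psi_basis D lam mu k \<Psi> \<longleftrightarrow>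
     onb_family (sec_space k (of_nat D * mu) lam) (sec_inner (of_nat D * mu) lam) (2 * k * D) \<Psi>
     \<and> (\<forall>n. Tstar k (- lam / of_nat (2 * k * D)) (\<Psi> n)
              = (\<lambda>z. exp (\<i> * of_real pi * of_int n / of_nat (k * D)) * \<Psi> n z))
     \<and> (\<forall>n. Tstar k ((of_nat D * mu - 2 * lam) / of_nat (2 * k * D)) (\<Psi> n) = \<Psi> (n + 1))"

definition Phi :: "nat \<Rightarrow> nat \<Rightarrow> (int \<Rightarrow> complex \<Rightarrow> complex) \<Rightarrow> int \<Rightarrow> complex \<Rightarrow> complex" where
  "Phi D k \<Psi> l = (\<lambda>z. 1 / complex_of_real (sqrt (real (2 * k * D))) *
      (\<Sum>n\<in>{0..<int (2 * k * D)}. exp (2 * \<i> * of_real pi * of_int n * of_int l / of_nat D) * \<Psi> n z))"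

definition gamma_cond :: "nat \<Rightarrow> complex \<Rightarrow> complex \<Rightarrow> nat \<Rightarrow> (complex \<Rightarrow> complex) \<Rightarrow>
    (int \<Rightarrow> complex \<Rightarrow> complex) \<Rightarrow> int \<Rightarrow> int \<Rightarrow> (int \<Rightarrow> complex) \<Rightarrow> bool" where
  "gamma_cond D lam mu k Z \<Psi> lo hi g \<longleftrightarrow>
     (\<forall>n. lo \<le> n \<and> n < hi \<longrightarrow>
        sec_inner (of_nat D * mu) lam
          (\<lambda>z. Z z - (\<Sum>l\<in>{0..<int D}. g l * Phi D k \<Psi> l z)) (\<Psi> n) = 0)"

end

theory Submission
  imports Defs "HOL-Number_Theory.Cong"
begin

text \<open>
  Write D = 2ab, N = 2kD and Z = Z_k.  The reflection z \<mapsto> -z of the plane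
  commutes with the lattices, reverses the translation operators and preserves holomorphy;
  since the bases (xi_l) and (Psi_n) are determined up to scalars by their eigenvalues and
  shift relations, normalised by xi_0(0) \<noteq> 0 and Psi_0(0) \<noteq> 0 (the latter for k large, by
  the asymptotics of Psi_0(0)), it maps xi_l to xi_{-l} and Psi_n to Psi_{-n}.  At t = -exp(i pi/2k) the coloured Jones polynomials satisfy
  J_{2k-m}(t) = -J_m(t): a full period of the defining quadratic Gauss-type sum vanishes,
  by a unit reindexing built from p, q with aq - bp = 2 and 4k | pq.  Hence Z is odd and its
  coordinates c_n in the basis Psi are odd in n.  The Psi_n-coordinate of
  sum_l g_l Phi_l is a discrete Fourier transform of g, periodic in n with period D; the
  orthogonality conditions defining gamma^+ and gamma^- say that it equals c_n on the windows
  of E_{k,+} and E_{k,-}.  These windows are mirror images of each other and, for k large,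
  share D consecutive integers after reflection, so the two transforms are related by the
  reflection n \<mapsto> -n everywhere; Fourier inversion yields gamma^-_{-l} = -gamma^+_l.
\<close>

subsection \<open>The symplectic form and the translation operators\<close>

lemma omg_add_right: "omg x (y + z) = omg x y + omg x z"
  by (simp add: omg_def algebra_simps)

lemma omg_minus_left: "omg (- x) y = - omg x y"
  by (simp add: omg_def)

lemma omg_minus_right: "omg x (- y) = - omg x y"
  by (simp add: omg_def)

lemma omg_self: "omg x x = 0"
  by (simp add: omg_def)

lemma omg_antisym: "omg x y = - omg y x"
  by (simp add: omg_def algebra_simps)

lemma omg_of_nat_left: "omg (of_nat D * x) y = real D * omg x y"
  by (simp add: omg_def algebra_simps)

text \<open>T*_x and T*_{-x} are mutually inverse: the two phases cancel since omega(x,x) = 0.\<close>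
lemma Tstar_inv: "Tstar k x (Tstar k (- x) f) = f"
proof
  fix y
  have "Tstar k x (Tstar k (- x) f) y
     = exp (- \<i> * complex_of_real (real k / 2 * omg x y)) *
       (exp (- \<i> * complex_of_real (real k / 2 * omg (-x) (x + y))) * f (-x + (x + y)))"
    by (simp add: Tstar_def)
  also have "omg (-x) (x + y) = - omg x y"
    by (simp add: omg_minus_left omg_add_right omg_self)
  also have "exp (- \<i> * complex_of_real (real k / 2 * omg x y)) *
       (exp (- \<i> * complex_of_real (real k / 2 * - omg x y)) * f (-x + (x + y)))
     = exp (- \<i> * complex_of_real (real k / 2 * omg x y)
            + - \<i> * complex_of_real (real k / 2 * - omg x y)) * f y"
    by (simp only: mult_exp_exp mult.assoc[symmetric]) simp
  also have "\<dots> = f y" by simp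
  finally show "Tstar k x (Tstar k (- x) f) y = f y" .
qed

lemma Tstar_inv': "Tstar k (- x) (Tstar k x f) = f"
  using Tstar_inv[of k "-x" f] by simp

lemma Tstar_scale: "Tstar k x (\<lambda>z. c * f z) = (\<lambda>z. c * Tstar k x f z)"
  by (auto simp: Tstar_def)

lemma Tstar_sum:
  "Tstar k x (\<lambda>z. \<Sum>i\<in>A. d i * f i z) = (\<lambda>z. \<Sum>i\<in>A. d i * Tstar k x (f i) z)"
  by (auto simp: Tstar_def sum_distrib_left sum_distrib_right mult_ac)

lemma Tstar_reflect: "Tstar k x (\<lambda>z. f (- z)) = (\<lambda>z. Tstar k (- x) f (- z))"
  by (auto simp: Tstar_def omg_minus_left omg_minus_right algebra_simps)

lemma Tstar_eigen_inv:
  assumes "Tstar k x f = (\<lambda>z. c * f z)" "c \<noteq> 0"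
  shows "Tstar k (- x) f = (\<lambda>z. inverse c * f z)"
proof -
  have "f = Tstar k (- x) (Tstar k x f)" by (simp add: Tstar_inv')
  also have "\<dots> = (\<lambda>z. c * Tstar k (- x) f z)" using assms(1) Tstar_scale by simp
  finally have "\<And>z. f z = c * Tstar k (- x) f z" by metis
  then show ?thesis using assms(2) by (auto simp: field_simps)
qed

subsection \<open>Periodic families on the integers\<close>

lemma periodic_shift:
  fixes e :: "int \<Rightarrow> 'a"
  assumes "\<forall>i. e (i + N) = e i"
  shows "e (i + N * m) = e i"
proof (induction m rule: int_induct[where k=0])
  case base then show ?case by simp
next
  case (step1 m) then show ?case using assms by (metis add.assoc distrib_left mult.right_neutral)
next
  case (step2 m)
  have "e (i + N * (m - 1)) = e (i + N * (m - 1) + N)" using assms by metis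
  also have "\<dots> = e (i + N * m)" by (simp add: algebra_simps)
  finally show ?case using step2 by simp
qed

lemma periodic_mod:
  fixes e :: "int \<Rightarrow> 'a"
  assumes "\<forall>i. e (i + N) = e i"
  shows "e (i mod N) = e i"
  using periodic_shift[OF assms, of "i mod N" "i div N"] by simp

lemma periodic_eq_from_window:
  fixes F H :: "int \<Rightarrow> 'a"
  assumes N: "N > 0" and perF: "\<forall>n. F (n + N) = F n" and perH: "\<forall>n. H (n + N) = H n"
    and win: "\<And>n. m0 \<le> n \<Longrightarrow> n < m0 + N \<Longrightarrow> F n = H n"
  shows "F n = H n"
proof -
  define r where "r = m0 + (n - m0) mod N"
  have n: "n = r + N * ((n - m0) div N)"
    using div_mult_mod_eq[of "n - m0" N] by (simp add: r_def algebra_simps)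
  have "F n = F r" using periodic_shift[OF perF, of r "(n - m0) div N"] n by simp
  also have "\<dots> = H r" using N by (intro win) (simp_all add: r_def)
  also have "\<dots> = H n" using periodic_shift[OF perH, of r "(n - m0) div N"] n by simp
  finally show ?thesis .
qed

text \<open>Multiplication by a unit modulo n permutes a full period.\<close>
lemma sum_reindex_unit:
  fixes f :: "int \<Rightarrow> 'a::comm_monoid_add"
  assumes n: "n > 0" and per: "\<forall>i. f (i + n) = f i" and cop: "coprime u n"
  shows "(\<Sum>i\<in>{0..<n}. f (u * i + v)) = (\<Sum>i\<in>{0..<n}. f i)"
proof -
  define h where "h i = (u * i + v) mod n" for i
  have inj: "inj_on h {0..<n}"
  proof
    fix i j assume ij: "i \<in> {0..<n}" "j \<in> {0..<n}" "h i = h j"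
    then have "[u * i + v = u * j + v] (mod n)" by (simp add: h_def cong_def)
    then have "n dvd u * (i - j)" by (simp add: cong_iff_dvd_diff algebra_simps)
    then have "n dvd (i - j)" using cop by (metis coprime_commute coprime_dvd_mult_right_iff)
    then show "i = j" using ij(1,2)
      by (metis atLeastLessThan_iff cong_iff_dvd_diff unique_euclidean_semiring_class.cong_def
          mod_pos_pos_trivial)
  qed
  have img: "h ` {0..<n} = {0..<n}"
  proof (rule card_subset_eq)
    show "h ` {0..<n} \<subseteq> {0..<n}" using n by (auto simp: h_def)
    show "card (h ` {0..<n}) = card {0..<n}" using inj by (simp add: card_image)
  qed simp
  have "(\<Sum>i\<in>{0..<n}. f (u * i + v)) = (\<Sum>i\<in>{0..<n}. f (h i))"
    by (simp add: h_def periodic_mod[OF per])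
  also have "\<dots> = (\<Sum>i\<in>h ` {0..<n}. f i)"
    using sum.reindex[OF inj, of f] by simp
  also have "\<dots> = (\<Sum>i\<in>{0..<n}. f i)" using img by simp
  finally show ?thesis .
qed

lemma sum_reflect:
  fixes g :: "int \<Rightarrow> 'a::comm_monoid_add"
  assumes N: "N > 0"
  shows "(\<Sum>l\<in>{0..<int N}. g l) = (\<Sum>l\<in>{0..<int N}. g ((- l) mod int N))"
proof -
  define f where "f l = g (l mod int N)" for l
  have per: "\<forall>i. f (i + int N) = f i" by (simp add: f_def)
  have "(\<Sum>l\<in>{0..<int N}. f ((-1) * l + 0)) = (\<Sum>l\<in>{0..<int N}. f l)"
    by (rule sum_reindex_unit[OF _ per]) (use N in simp_all)
  moreover have "(\<Sum>l\<in>{0..<int N}. f l) = (\<Sum>l\<in>{0..<int N}. g l)"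
    by (intro sum.cong) (auto simp: f_def)
  ultimately show ?thesis by (simp add: f_def)
qed

subsection \<open>Number theory behind the symmetry of the coloured Jones polynomials\<close>

lemma split_modulus:
  fixes K a :: int
  assumes "K > 0"
  shows "\<exists>K1 K2 n. K = K1 * K2 \<and> K1 dvd a ^ n \<and> coprime K2 a"
  using assms
proof (induction "nat K" arbitrary: K rule: less_induct)
  case less
  show ?case
  proof (cases "coprime K a")
    case True
    then show ?thesis by (rule_tac x=1 in exI, rule_tac x=K in exI, rule_tac x=0 in exI) simp
  next
    case False
    define g where "g = gcd K a"
    have "g \<noteq> 1" using False by (simp add: g_def coprime_iff_gcd_eq_1)
    moreover have "g \<noteq> 0" "g \<ge> 0" using less.prems by (simp_all add: g_def)
    ultimately have g2: "g > 1" by linarith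
    have "g dvd K" by (simp add: g_def)
    then obtain K' where K': "K = g * K'" by blast
    have "K' > 0" using K' less.prems g2 by (simp add: zero_less_mult_iff)
    moreover have "nat K' < nat K" using K' g2 \<open>K' > 0\<close> by (simp add: nat_less_eq_zless)
    ultimately obtain K1 K2 n where IH: "K' = K1 * K2" "K1 dvd a ^ n" "coprime K2 a"
      using less.hyps by blast
    have "g * K1 dvd a ^ Suc n" using IH(2) by (simp add: g_def mult_dvd_mono)
    then show ?thesis using K' IH
      by (rule_tac x="g*K1" in exI, rule_tac x=K2 in exI, rule_tac x="Suc n" in exI)
         (simp add: mult.assoc)
  qed
qed

lemma bezout_two_with_divisors:
  fixes a b K1 K2 :: int
  assumes "coprime a b" "coprime K1 K2" "coprime K1 b" "coprime K2 a"
  shows "\<exists>p q. a * q - b * p = 2 \<and> K2 dvd p \<and> K1 dvd q"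
proof -
  obtain x v where uv: "x * a + v * b = 1"
    using bezout_int[of a b] assms(1) by (auto simp: coprime_iff_gcd_eq_1)
  define y where "y = - v"
  have xy: "a * x - b * y = 1" using uv by (simp add: y_def algebra_simps)
  obtain ia where ia: "[a * ia = 1] (mod K2)"
    using cong_solve_coprime_int[of a K2] assms(4) by (auto simp: coprime_commute)
  obtain ib where ib: "[b * ib = 1] (mod K1)"
    using cong_solve_coprime_int[of b K1] assms(3) by (auto simp: coprime_commute)
  obtain j where j: "[j = -2*x*ib] (mod K1)" "[j = -2*y*ia] (mod K2)"
    using binary_chinese_remainder_int[OF assms(2)] by blast
  define p where "p = 2 * y + a * j"
  define q where "q = 2 * x + b * j"
  have "[a * j = -2*y * (a * ia)] (mod K2)"
    using cong_scalar_left[OF j(2), of a] by (simp add: algebra_simps)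
  also have "[-2*y * (a * ia) = -2*y * 1] (mod K2)" by (rule cong_scalar_left[OF ia])
  finally have dp: "K2 dvd p" unfolding p_def by (simp add: cong_iff_dvd_diff algebra_simps)
  have "[b * j = -2*x * (b * ib)] (mod K1)"
    using cong_scalar_left[OF j(1), of b] by (simp add: algebra_simps)
  also have "[-2*x * (b * ib) = -2*x * 1] (mod K1)" by (rule cong_scalar_left[OF ib])
  finally have "K1 dvd q" unfolding q_def by (simp add: cong_iff_dvd_diff algebra_simps)
  moreover have "a * q - b * p = 2" using xy by (simp add: p_def q_def algebra_simps)
  ultimately show ?thesis using dp by blast
qed

text \<open>For coprime a, b and even K > 0 there are p, q with aq - bp = 2, K | pq and p + q even.
  They produce the unit w = 1 + bp (w^2 = 1 mod 2K) used to reindex the Jones sums.\<close>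
lemma bezout_two_divisible_product:
  fixes a b K :: int
  assumes cop: "coprime a b" and K: "K > 0" "even K"
  shows "\<exists>p q. a * q - b * p = 2 \<and> K dvd p * q \<and> even (p + q)"
proof -
  obtain K1 K2 n where KK: "K = K1 * K2" "K1 dvd a ^ n" "coprime K2 a"
    using split_modulus[OF K(1)] by blast
  have cK1b: "coprime K1 b" using coprime_divisors[OF KK(2) dvd_refl[of b]] cop by simp
  have "coprime K1 K2"
    using coprime_divisors[OF KK(2) dvd_refl[of K2]] KK(3) by (simp add: coprime_commute)
  then obtain p q where eq: "a * q - b * p = 2" and dp: "K2 dvd p" and dq: "K1 dvd q"
    using bezout_two_with_divisors[OF cop _ cK1b KK(3)] by blast
  have "even (p + q)"
  proof (cases "even a")
    case True
    then have "odd b" using cop coprime_common_divisor[of a b 2] by auto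
    have "odd K2" using True KK(3) coprime_common_divisor[of K2 a 2] by auto
    then have "even K1" using KK(1) K(2) by simp
    then have "even q" using dq by (meson dvd_trans)
    have "b * p = a * q - 2" using eq by simp
    then have "even (b * p)" using True by simp
    then show ?thesis using \<open>odd b\<close> \<open>even q\<close> by simp
  next
    case False
    show ?thesis
    proof (cases "even b")
      case True
      have "odd K1" using True cK1b coprime_common_divisor[of K1 b 2] by auto
      then have "even K2" using KK(1) K(2) by simp
      then have "even p" using dp by (meson dvd_trans)
      have "a * q = b * p + 2" using eq by simp
      then have "even (a * q)" using \<open>even p\<close> by simp
      then show ?thesis using False \<open>even p\<close> by simp
    next
      case bo: False
      have "even (a * q - b * p)" using eq by simp
      then show ?thesis using False bo by auto
    qed
  qed
  moreover have "K dvd p * q" using mult_dvd_mono[OF dq dp] KK(1) by (simp add: mult.commute)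
  ultimately show ?thesis using eq by blast
qed

definition jones_root :: "nat \<Rightarrow> complex" where
  "jones_root k = - exp (\<i> * of_real pi / of_nat (2 * k))"

lemma jones_root_nonzero: "jones_root k \<noteq> 0"
  by (simp add: jones_root_def)

lemma jones_root_pow: assumes "k > 0" shows "jones_root k ^ (4 * k) = 1"
proof -
  have "exp (\<i> * of_real pi / of_nat (2 * k)) ^ (4 * k)
      = exp (of_nat (4 * k) * (\<i> * of_real pi / of_nat (2 * k)))"
    by (rule exp_of_nat_mult[symmetric])
  also have "of_nat (4 * k) * (\<i> * of_real pi / of_nat (2 * k)) = 2 * pi * \<i>"
    using assms by (simp add: field_simps)
  finally have e: "exp (\<i> * of_real pi / of_nat (2 * k)) ^ (4 * k) = 1" by simp
  have "jones_root k ^ (4 * k) = (-1) ^ (4 * k) * exp (\<i> * of_real pi / of_nat (2 * k)) ^ (4 * k)"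
    by (simp add: jones_root_def power_mult_distrib[symmetric])
  then show ?thesis using e by simp
qed

lemma powi_cong:
  fixes t :: complex
  assumes "t \<noteq> 0" "t ^ M = 1" "int M dvd (x - y)"
  shows "t powi x = t powi y"
proof -
  obtain m where "x - y = int M * m" using assms(3) by (rule dvdE)
  then have m: "x = y + int M * m" by simp
  have "t powi x = t powi y * (t powi int M) powi m"
    using assms(1) by (simp add: m power_int_add power_int_mult)
  then show ?thesis using assms(2) by simp
qed

definition torus_term :: "nat \<Rightarrow> nat \<Rightarrow> complex \<Rightarrow> int \<Rightarrow> complex" where
  "torus_term a b t s = t powi (int (a*b) * s\<^sup>2) *
        (t powi (- 2 * (int a + int b) * s + 2) - t powi (- 2 * (int a - int b) * s - 2))"

lemma torus_term_eq:
  assumes "t \<noteq> 0"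
  shows "torus_term a b t s = t powi (int (a*b) * s\<^sup>2 - 2 * (int a + int b) * s + 2)
                     - t powi (int (a*b) * s\<^sup>2 - 2 * (int a - int b) * s - 2)"
  using assms by (simp add: torus_term_def right_diff_distrib power_int_add[symmetric] algebra_simps)

lemma jones_pos_torus_term:
  "jones_pos a b l t = t powi (int (a*b) * (1 - (int l)\<^sup>2)) / (t\<^sup>2 - t powi (-2)) *
     (\<Sum>j<l. torus_term a b t (2 * int j - int l + 1))"
  by (simp add: jones_pos_def torus_term_def Let_def)

text \<open>The substitution s \<mapsto> (1 + bp) s - (p + q) turns the first exponent into the second,
  up to a multiple of pq (and hence of 4k).\<close>
lemma exponent_identity:
  fixes a b p q s :: int
  assumes "a * q - b * p = 2"
  shows "(a * b * s ^ 2 - 2 * (a + b) * s + 2)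
           - (a * b * ((1 + b * p) * s - (p + q)) ^ 2 - 2 * (a - b) * ((1 + b * p) * s - (p + q)) - 2)
         = - (p * q) * (a * b * s - a - b) ^ 2"
proof -
  have "(a * b * s ^ 2 - 2 * (a + b) * s + 2)
          - (a * b * ((1 + b * p) * s - (p + q)) ^ 2 - 2 * (a - b) * ((1 + b * p) * s - (p + q)) - 2)
         - (- (p * q) * (a * b * s - a - b) ^ 2)
        = (a * q - b * p - 2) * (- b * q + 2 * b * s - 2 + a * b^2 * p * s^2 - 2 * a * b * p * s + a * p)"
    by (simp add: power2_eq_square algebra_simps)
  then show ?thesis using assms by simp
qed

lemma quadratic_powi_periodic:
  fixes t :: complex and A e c s :: int
  assumes t0: "t \<noteq> 0" and t4: "t ^ (4 * k) = 1"
  shows "t powi (A * (s + 2 * int k)\<^sup>2 - 2 * e * (s + 2 * int k) + c) = t powi (A * s\<^sup>2 - 2 * e * s + c)"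
proof (rule powi_cong[OF t0 t4])
  have "(A * (s + 2 * int k)\<^sup>2 - 2 * e * (s + 2 * int k) + c) - (A * s\<^sup>2 - 2 * e * s + c)
      = int (4 * k) * (A * (s + int k) - e)"
    by (simp add: power2_eq_square algebra_simps)
  then show "int (4 * k) dvd (A * (s + 2 * int k)\<^sup>2 - 2 * e * (s + 2 * int k) + c) - (A * s\<^sup>2 - 2 * e * s + c)"
    by (metis dvd_triv_left)
qed

lemma torus_term_periodic:
  assumes t0: "t \<noteq> 0" and t4: "t ^ (4 * k) = 1"
  shows "torus_term a b t (s + 2 * int k) = torus_term a b t s"
  using quadratic_powi_periodic[OF t0 t4, of "int (a*b)" s "int a + int b" 2]
    quadratic_powi_periodic[OF t0 t4, of "int (a*b)" s "int a - int b" "-2"]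
  by (simp add: torus_term_eq[OF t0])

text \<open>With aq - bp = 2 and 4k | pq, the number w = 1 + bp satisfies w^2 = 1 + ab pq, so it is
  odd and invertible modulo 2k.\<close>
lemma reindexing_unit:
  fixes A B p q :: int
  assumes pq: "A * q - B * p = 2" "4 * int k dvd p * q"
  shows "coprime (1 + B * p) (2 * int k)" "odd (1 + B * p)"
proof -
  define w where "w = 1 + B * p"
  have "w * w - 1 = (B * p) * (B * p + 2)" by (simp add: w_def algebra_simps)
  also have "B * p + 2 = A * q" using pq(1) by simp
  finally have "w * w - 1 = (A * B) * (p * q)" by (simp add: algebra_simps)
  then have dw: "4 * int k dvd w * w - 1" using pq(2) by simp
  have "2 * int k dvd 4 * int k" by (rule dvd_mult_right[of 2]) simp
  then have "2 * int k dvd w * w - 1" using dw by (rule dvd_trans)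
  then have "[w * w = 1] (mod 2 * int k)" by (simp add: cong_iff_dvd_diff)
  then show "coprime (1 + B * p) (2 * int k)" unfolding w_def[symmetric]
    by (metis coprime_iff_invertible_int)
  have "(2::int) dvd 4 * int k" by simp
  then have "even (w * w - 1)" using dw by (rule dvd_trans)
  then show "odd (1 + B * p)" unfolding w_def[symmetric] by auto
qed

text \<open>Key vanishing: the torus terms summed over a full period (s = 2i + sigma, i mod 2k)
  cancel, because the two exponentials are permuted by a unit reindexing.\<close>
lemma torus_sum_full_period:
  fixes a b k :: nat and t :: complex and \<sigma> :: int
  assumes k: "k > 0" and t0: "t \<noteq> 0" and t4: "t ^ (4 * k) = 1" and cop: "coprime a b"
  shows "(\<Sum>i\<in>{0..<2 * int k}. torus_term a b t (2 * i + \<sigma>)) = 0"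
proof -
  define A where "A = int a" define B where "B = int b"
  have copAB: "coprime A B" using cop by (simp add: A_def B_def)
  obtain p q where pq: "A * q - B * p = 2" "4 * int k dvd p * q" "even (p + q)"
    using bezout_two_divisible_product[OF copAB, of "4 * int k"] k by auto
  define w where "w = 1 + B * p"
  define c where "c = - (p + q)"
  define E1 where "E1 s = A * B * s ^ 2 - 2 * (A + B) * s + 2" for s
  define E2 where "E2 s = A * B * s ^ 2 - 2 * (A - B) * s - 2" for s
  have term_eq: "torus_term a b t s = t powi E1 s - t powi E2 s" for s
    using torus_term_eq[OF t0, of a b s] by (simp add: E1_def E2_def A_def B_def power2_eq_square)
  have M: "int (4 * k) = 4 * int k" by simp
  have subst: "t powi E1 s = t powi E2 (w * s + c)" for s
  proof (rule powi_cong[OF t0 t4])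
    have wc: "w * s + c = (1 + B * p) * s - (p + q)" by (simp add: w_def c_def)
    show "int (4 * k) dvd E1 s - E2 (w * s + c)"
      unfolding wc E1_def E2_def exponent_identity[OF pq(1)] using pq(2) by (simp add: M)
  qed
  have copw: "coprime w (2 * int k)" and "odd w"
    using reindexing_unit[OF pq(1,2)] by (simp_all add: w_def)
  then have "even ((w - 1) * \<sigma> + c)" using pq(3) by (simp add: c_def)
  then obtain v where v2: "(w - 1) * \<sigma> + c = 2 * v" by (rule evenE)
  define f where "f i = t powi E2 (2 * i + \<sigma>)" for i
  have E2_per: "t powi E2 (s + 2 * int k) = t powi E2 s" for s
    using quadratic_powi_periodic[OF t0 t4, of "A * B" s "A - B" "-2"] by (simp add: E2_def)
  have fper: "\<forall>i. f (i + 2 * int k) = f i"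
  proof
    fix i
    have "f (i + 2 * int k) = t powi E2 ((2 * i + \<sigma> + 2 * int k) + 2 * int k)"
      by (simp add: f_def algebra_simps)
    also have "\<dots> = f i" by (simp only: E2_per f_def)
    finally show "f (i + 2 * int k) = f i" .
  qed
  have "(\<Sum>i\<in>{0..<2 * int k}. t powi E1 (2 * i + \<sigma>)) = (\<Sum>i\<in>{0..<2 * int k}. f (w * i + v))"
  proof (rule sum.cong[OF refl])
    fix i
    have "w * (2 * i + \<sigma>) + c = 2 * (w * i + v) + \<sigma>" using v2 by (simp add: algebra_simps)
    then show "t powi E1 (2 * i + \<sigma>) = f (w * i + v)" by (simp add: subst f_def)
  qed
  also have "\<dots> = (\<Sum>i\<in>{0..<2 * int k}. f i)"
    by (rule sum_reindex_unit) (use k fper copw in auto)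
  finally show ?thesis by (simp add: term_eq sum_subtractf f_def)
qed

subsection \<open>The symmetry J_{2k-m} = -J_m at t = -exp(i pi / 2k)\<close>

text \<open>The torus sums for m and 2k - m together form one full period, hence cancel.\<close>
lemma torus_sums_complementary:
  assumes k: "k > 0" and m: "0 < m" "m < 2 * k" and cop: "coprime a b"
  shows "(\<Sum>j<2 * k - m. torus_term a b (jones_root k) (2 * int j - int (2 * k - m) + 1))
       = - (\<Sum>j<m. torus_term a b (jones_root k) (2 * int j - int m + 1))"
proof -
  define T where "T = torus_term a b (jones_root k)"
  define g where "g j = T (2 * int j - 2 * int k + int m + 1)" for j :: nat
  have S1: "(\<Sum>j<2 * k - m. T (2 * int j - int (2 * k - m) + 1)) = (\<Sum>j<2 * k - m. g j)"
    using m by (simp add: g_def of_nat_diff algebra_simps)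
  have "(\<Sum>j\<in>{2 * k - m..<2 * k}. g j) = (\<Sum>j\<in>{0 + (2 * k - m)..<m + (2 * k - m)}. g j)"
    using m by simp
  also have "\<dots> = (\<Sum>j\<in>{0..<m}. g (j + (2 * k - m)))"
    by (subst sum.atLeastLessThan_shift_bounds) (simp add: comp_def add.commute)
  also have "\<dots> = (\<Sum>j<m. T (2 * int j - int m + 1))"
  proof (rule sum.cong)
    fix j
    have "2 * int (j + (2 * k - m)) - 2 * int k + int m + 1 = (2 * int j - int m + 1) + 2 * int k"
      using m by (simp add: of_nat_diff algebra_simps)
    then have "g (j + (2 * k - m)) = T ((2 * int j - int m + 1) + 2 * int k)"
      by (simp only: g_def)
    then show "g (j + (2 * k - m)) = T (2 * int j - int m + 1)"
      unfolding T_def by (simp only: torus_term_periodic[OF jones_root_nonzero jones_root_pow[OF k]])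
  qed (simp add: lessThan_atLeast0)
  finally have S2: "(\<Sum>j<m. T (2 * int j - int m + 1)) = (\<Sum>j\<in>{2 * k - m..<2 * k}. g j)" ..
  have "(\<Sum>j<2 * k - m. g j) + (\<Sum>j\<in>{2 * k - m..<2 * k}. g j) = (\<Sum>j\<in>{0..<2 * k}. g j)"
    using m by (simp add: lessThan_atLeast0 sum.atLeastLessThan_concat)
  also have "\<dots> = (\<Sum>i\<in>{int 0..<int (2 * k)}. T (2 * i + (int m + 1 - 2 * int k)))"
    by (subst sum.atLeast_int_lessThan_int_shift) (simp add: g_def algebra_simps)
  also have "\<dots> = 0"
    using torus_sum_full_period[OF k jones_root_nonzero jones_root_pow[OF k] cop]
    by (simp add: T_def)
  finally show ?thesis using S1 S2 by (simp add: T_def eq_neg_iff_add_eq_0)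
qed

lemma jones_pos_complement:
  assumes k: "k > 0" and m: "0 < m" "m < 2 * k" and cop: "coprime a b"
  shows "jones_pos a b (2 * k - m) (jones_root k) = - jones_pos a b m (jones_root k)"
proof -
  have "jones_root k powi (int (a*b) * (1 - (int (2 * k - m))\<^sup>2))
      = jones_root k powi (int (a*b) * (1 - (int m)\<^sup>2))"
  proof (rule powi_cong[OF jones_root_nonzero jones_root_pow[OF k]])
    have "int (a*b) * (1 - (int (2 * k - m))\<^sup>2) - int (a*b) * (1 - (int m)\<^sup>2)
        = int (4 * k) * (int (a*b) * (int m - int k))"
      using m by (simp add: of_nat_diff power2_eq_square algebra_simps)
    then show "int (4 * k) dvd int (a*b) * (1 - (int (2 * k - m))\<^sup>2) - int (a*b) * (1 - (int m)\<^sup>2)"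
      by (metis dvd_triv_left)
  qed
  then show ?thesis
    unfolding jones_pos_torus_term using torus_sums_complementary[OF k m cop] by simp
qed

lemma jones_reflect:
  assumes k: "k > 0" and cop: "coprime a b" and l: "l \<in> {0..<2 * int k}"
  shows "jones a b ((- l) mod (2 * int k)) (jones_root k) = - jones a b l (jones_root k)"
proof (cases "l = 0")
  case True then show ?thesis by (simp add: jones_def)
next
  case False
  then have l0: "0 < l" "l < 2 * int k" using l by auto
  have "(- l) mod (2 * int k) = (2 * int k - l) mod (2 * int k)"
    by (simp add: mod_eq_dvd_iff)
  also have "\<dots> = 2 * int k - l" using l0 by (intro mod_pos_pos_trivial) auto
  finally have m: "(- l) mod (2 * int k) = 2 * int k - l" .
  have n1: "nat (2 * int k - l) = 2 * k - nat l" using l0 by simp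
  have "jones a b (2 * int k - l) (jones_root k) = jones_pos a b (2 * k - nat l) (jones_root k)"
    using l0 by (simp add: jones_def n1)
  also have "\<dots> = - jones_pos a b (nat l) (jones_root k)"
    using l0 by (intro jones_pos_complement[OF k _ _ cop]) auto
  also have "\<dots> = - jones a b l (jones_root k)" using l0 by (simp add: jones_def)
  finally show ?thesis using m by simp
qed

lemma knot_state_odd:
  assumes k: "k > 0" and cop: "coprime a b"
    and par: "\<And>l. (\<lambda>z. \<xi> l (- z)) = \<xi> (- l)" and per: "\<forall>l. \<xi> (l + int (2 * k)) = \<xi> l"
  shows "knot_state a b k \<xi> (- z) = - knot_state a b k \<xi> z"
proof -
  define J where "J l = jones a b l (jones_root k)" for l
  have kk: "int (2 * k) = 2 * int k" by simp
  have "(\<Sum>l\<in>{0..<2 * int k}. J l * \<xi> l (- z)) = (\<Sum>l\<in>{0..<int (2 * k)}. J l * \<xi> (- l) z)"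
    using par by (simp add: fun_eq_iff)
  also have "\<dots> = (\<Sum>l\<in>{0..<int (2 * k)}.
                     J ((- l) mod int (2 * k)) * \<xi> (- ((- l) mod int (2 * k))) z)"
    by (rule sum_reflect) (use k in simp)
  also have "\<dots> = (\<Sum>l\<in>{0..<2 * int k}. - J l * \<xi> l z)"
  proof (rule sum.cong)
    fix l assume l: "l \<in> {0..<2 * int k}"
    have "\<xi> (- ((- l) mod int (2 * k))) = \<xi> ((- ((- l) mod int (2 * k))) mod int (2 * k))"
      by (rule periodic_mod[OF per, symmetric])
    also have "(- ((- l) mod int (2 * k))) mod int (2 * k) = l"
      using l by (simp add: mod_minus_eq)
    finally show "J ((- l) mod int (2 * k)) * \<xi> (- ((- l) mod int (2 * k))) z = - J l * \<xi> l z"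
      using jones_reflect[OF k cop l] unfolding kk J_def by simp
  qed (simp add: kk)
  finally have "(\<Sum>l\<in>{0..<2 * int k}. J l * \<xi> l (- z)) = - (\<Sum>l\<in>{0..<2 * int k}. J l * \<xi> l z)"
    by (simp add: sum_negf)
  then show ?thesis unfolding knot_state_def jones_root_def[symmetric] J_def by simp
qed

subsection \<open>The spaces of theta functions and their inner product\<close>

lemma omg_coordinates:
  assumes "omg u v \<noteq> 0"
  shows "z = complex_of_real (omg z v / omg u v) * u + complex_of_real (omg u z / omg u v) * v"
proof -
  have "complex_of_real (omg u v) * z
      = complex_of_real (omg z v) * u + complex_of_real (omg u z) * v"
    by (simp add: complex_eq_iff omg_def algebra_simps)
  then show ?thesis using assms
    by (simp add: field_simps of_real_divide del: of_real_mult)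
qed

lemma fund_dom_repr:
  assumes "omg u v \<noteq> 0"
  shows "fund_dom u v = {z. 0 \<le> omg z v / omg u v \<and> omg z v / omg u v < 1 \<and>
                           0 \<le> omg u z / omg u v \<and> omg u z / omg u v < 1}"
proof (intro set_eqI iffI)
  fix z assume "z \<in> fund_dom u v"
  then obtain s t where st: "z = complex_of_real s * u + complex_of_real t * v"
      "0 \<le> s" "s < 1" "0 \<le> t" "t < 1"
    unfolding fund_dom_def by blast
  have "omg z v = s * omg u v" "omg u z = t * omg u v"
    using st(1) by (simp_all add: omg_def algebra_simps)
  then show "z \<in> {z. 0 \<le> omg z v / omg u v \<and> omg z v / omg u v < 1 \<and>
                           0 \<le> omg u z / omg u v \<and> omg u z / omg u v < 1}"
    using st assms by simp
next
  fix z assume "z \<in> {z. 0 \<le> omg z v / omg u v \<and> omg z v / omg u v < 1 \<and>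
                           0 \<le> omg u z / omg u v \<and> omg u z / omg u v < 1}"
  then show "z \<in> fund_dom u v" unfolding fund_dom_def using omg_coordinates[OF assms, of z] by blast
qed

lemma fund_dom_sets:
  assumes "omg u v \<noteq> 0"
  shows "fund_dom u v \<in> sets lborel"
proof -
  have "(\<lambda>z. omg z v / omg u v) \<in> borel_measurable borel"
       "(\<lambda>z. omg u z / omg u v) \<in> borel_measurable borel"
    using assms unfolding omg_def
    by (auto intro!: borel_measurable_continuous_onI continuous_intros)
  then have "{z. 0 \<le> omg z v / omg u v \<and> omg z v / omg u v < 1 \<and>
                 0 \<le> omg u z / omg u v \<and> omg u z / omg u v < 1} \<in> sets borel"
    by measurable
  then show ?thesis using fund_dom_repr[OF assms] by simp
qed

lemma fund_dom_bounded: "fund_dom u v \<subseteq> cball 0 (norm u + norm v)"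
proof
  fix z assume "z \<in> fund_dom u v"
  then obtain s t where st: "z = complex_of_real s * u + complex_of_real t * v"
      "0 \<le> s" "s < 1" "0 \<le> t" "t < 1"
    unfolding fund_dom_def by blast
  have "norm z \<le> norm (complex_of_real s * u) + norm (complex_of_real t * v)"
    using st(1) norm_triangle_ineq by blast
  also have "\<dots> = \<bar>s\<bar> * norm u + \<bar>t\<bar> * norm v" by (simp add: norm_mult)
  also have "\<dots> \<le> norm u + norm v" using st by (intro add_mono mult_left_le_one_le) auto
  finally show "z \<in> cball 0 (norm u + norm v)" by simp
qed

lemma integrable_fund_dom:
  fixes h :: "complex \<Rightarrow> complex"
  assumes "omg u v \<noteq> 0" "continuous_on UNIV h"
  shows "set_integrable lborel (fund_dom u v) h"
proof (rule set_integrable_subset[OF _ fund_dom_sets[OF assms(1)] fund_dom_bounded])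
  show "set_integrable lborel (cball 0 (norm u + norm v)) h"
    unfolding set_integrable_def
    by (rule borel_integrable_compact) (use assms(2) continuous_on_subset in auto)
qed

lemma sec_inner_sum:
  assumes om: "omg u v \<noteq> 0" and fin: "finite A"
    and cf: "\<forall>i\<in>A. continuous_on UNIV (f i)" and cg: "continuous_on UNIV g"
  shows "sec_inner u v (\<lambda>z. \<Sum>i\<in>A. d i * f i z) g = (\<Sum>i\<in>A. d i * sec_inner u v (f i) g)
     \<and> set_integrable lborel (fund_dom u v) (\<lambda>z. delta_inner (\<Sum>i\<in>A. d i * f i z) (g z))"
  using fin cf
proof (induction A rule: finite_induct)
  case empty
  then show ?case by (simp add: sec_inner_def delta_inner_def set_integrable_def)
next
  case (insert x F)
  have ix: "set_integrable lborel (fund_dom u v) (\<lambda>z. d x * delta_inner (f x z) (g z))"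
    using insert.prems om cg unfolding delta_inner_def
    by (intro integrable_fund_dom continuous_intros) auto
  have split: "delta_inner (\<Sum>i\<in>insert x F. d i * f i z) (g z)
      = d x * delta_inner (f x z) (g z) + delta_inner (\<Sum>i\<in>F. d i * f i z) (g z)" for z
    using insert.hyps by (simp add: delta_inner_def algebra_simps)
  have IH: "sec_inner u v (\<lambda>z. \<Sum>i\<in>F. d i * f i z) g = (\<Sum>i\<in>F. d i * sec_inner u v (f i) g)"
     "set_integrable lborel (fund_dom u v) (\<lambda>z. delta_inner (\<Sum>i\<in>F. d i * f i z) (g z))"
    using insert by auto
  show ?case
    unfolding split sec_inner_def using set_integral_add[OF ix IH(2)] IH(1) insert.hyps
    by (simp add: sec_inner_def)
qed

lemma sec_space_cont: "f \<in> sec_space k u v \<Longrightarrow> continuous_on UNIV f"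
  unfolding sec_space_def holo_sec_def
  by (auto intro!: continuous_at_imp_continuous_on differentiable_imp_continuous_within)

lemma onb_coeff:
  assumes onb: "onb_family V (sec_inner u v) N e" and om: "omg u v \<noteq> 0"
    and Vc: "\<forall>f\<in>V. continuous_on UNIV f" and j: "j \<in> {0..<int N}"
  shows "sec_inner u v (\<lambda>z. \<Sum>i\<in>{0..<int N}. d i * e i z) (e j) = d j"
proof -
  have ein: "\<forall>i. e i \<in> V" using onb by (simp add: onb_family_def)
  have "sec_inner u v (\<lambda>z. \<Sum>i\<in>{0..<int N}. d i * e i z) (e j)
      = (\<Sum>i\<in>{0..<int N}. d i * sec_inner u v (e i) (e j))"
    using sec_inner_sum[OF om, of "{0..<int N}" e "e j" d] ein Vc by auto
  also have "\<dots> = (\<Sum>i\<in>{0..<int N}. d i * (if i = j then 1 else 0))"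
    using onb j by (intro sum.cong) (auto simp: onb_family_def)
  also have "\<dots> = d j" using j by (simp add: if_distrib cong: if_cong)
  finally show ?thesis .
qed

lemma onb_unique:
  assumes onb: "onb_family V (sec_inner u v) N e" and om: "omg u v \<noteq> 0"
    and Vc: "\<forall>f\<in>V. continuous_on UNIV f"
    and eq: "(\<lambda>z. \<Sum>i\<in>{0..<int N}. d i * e i z) = (\<lambda>z. \<Sum>i\<in>{0..<int N}. d' i * e i z)"
    and j: "j \<in> {0..<int N}"
  shows "d j = d' j"
  using onb_coeff[OF onb om Vc j, of d] onb_coeff[OF onb om Vc j, of d'] eq by simp

lemma onb_nonzero:
  assumes onb: "onb_family V (sec_inner u v) N e" and N: "N > 0"
  shows "e j \<noteq> (\<lambda>z. 0)"
proof
  assume e0: "e j = (\<lambda>z. 0)"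
  have per: "\<forall>i. e (i + int N) = e i" using onb by (simp add: onb_family_def)
  have "j mod int N \<in> {0..<int N}" using N by simp
  then have "sec_inner u v (e (j mod int N)) (e (j mod int N)) = 1"
    using onb unfolding onb_family_def by simp
  then have "sec_inner u v (\<lambda>z. 0) (\<lambda>z. 0) = 1" unfolding periodic_mod[OF per] e0 .
  then show False by (simp add: sec_inner_def delta_inner_def)
qed

lemma expansion_of_combination:
  fixes f :: "'i \<Rightarrow> complex \<Rightarrow> complex" and e :: "'j \<Rightarrow> complex \<Rightarrow> complex"
  assumes exp: "\<And>l. l \<in> L \<Longrightarrow> \<exists>d. f l = (\<lambda>z. \<Sum>i\<in>S. d i * e i z)"
  shows "\<exists>c. (\<lambda>z. \<Sum>l\<in>L. x l * f l z) = (\<lambda>z. \<Sum>i\<in>S. c i * e i z)"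
proof -
  obtain d where d: "\<And>l. l \<in> L \<Longrightarrow> f l = (\<lambda>z. \<Sum>i\<in>S. d l i * e i z)"
    using exp by metis
  have "(\<Sum>l\<in>L. x l * f l z) = (\<Sum>i\<in>S. (\<Sum>l\<in>L. x l * d l i) * e i z)" for z
  proof -
    have "(\<Sum>l\<in>L. x l * f l z) = (\<Sum>l\<in>L. \<Sum>i\<in>S. x l * d l i * e i z)"
      using d by (simp add: sum_distrib_left mult.assoc)
    also have "\<dots> = (\<Sum>i\<in>S. (\<Sum>l\<in>L. x l * d l i) * e i z)"
      by (subst sum.swap) (simp add: sum_distrib_right)
    finally show ?thesis .
  qed
  then show ?thesis by (intro exI[of _ "\<lambda>i. \<Sum>l\<in>L. x l * d l i"]) (simp add: fun_eq_iff)
qed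

lemma holo_sec_reflect:
  assumes "holo_sec k f"
  shows "holo_sec k (\<lambda>z. f (- z))"
proof -
  define Df where "Df y = frechet_derivative f (at y)" for y
  have hd: "(f has_derivative Df y) (at y)" for y
    using assms frechet_derivative_works[of f "at y"] unfolding Df_def holo_sec_def by simp
  have hd2: "((\<lambda>z. f (- z)) has_derivative (\<lambda>w. Df (- y) (- w))) (at y)" for y
    using has_derivative_compose[OF has_derivative_minus[OF has_derivative_ident] hd[of "-y"]]
    by simp
  have lin: "Df y (- w) = - Df y w" for y w
    using has_derivative_bounded_linear[OF hd[of y]] by (simp add: bounded_linear.linear linear_neg)
  have cd: "cov_der k (\<lambda>z. f (- z)) y w = - cov_der k f (- y) w" for y w
    by (simp add: cov_der_def frechet_derivative_at[OF hd2, symmetric] lin Df_def[symmetric]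
        omg_minus_left algebra_simps)
  show ?thesis unfolding holo_sec_def
  proof (intro conjI allI)
    fix y show "(\<lambda>z. f (- z)) differentiable at y" using hd2 by (auto intro: differentiableI)
  next
    fix y v
    show "cov_der k (\<lambda>z. f (- z)) y (\<i> * v) = \<i> * cov_der k (\<lambda>z. f (- z)) y v"
      using assms by (simp add: holo_sec_def cd)
  qed
qed

lemma lattice_neg: "x \<in> lattice u v \<Longrightarrow> - x \<in> lattice u v"
  unfolding lattice_def
  by clarsimp (metis add_uminus_conv_diff minus_add_distrib mult_minus_left of_int_minus)

lemma sec_space_reflect:
  assumes "f \<in> sec_space k u v"
  shows "(\<lambda>z. f (- z)) \<in> sec_space k u v"
proof -
  have "Tstar k x (\<lambda>z. f (- z)) = (\<lambda>z. f (- z))" if "x \<in> lattice u v" for x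
    using assms lattice_neg[OF that] by (simp add: sec_space_def Tstar_reflect)
  then show ?thesis using assms holo_sec_reflect by (simp add: sec_space_def)
qed

text \<open>H_k is contained in H_{D,k}, since R_D = D mu Z + lambda Z is a sublattice.\<close>
lemma sec_space_sub: "sec_space k lam mu \<subseteq> sec_space k (of_nat D * mu) lam"
proof -
  have "lattice (of_nat D * mu) lam \<subseteq> lattice lam mu"
  proof
    fix x assume "x \<in> lattice (of_nat D * mu) lam"
    then obtain m n where "x = of_int m * (of_nat D * mu) + of_int n * lam"
      unfolding lattice_def by blast
    then have "x = of_int n * lam + of_int (m * int D) * mu" by (simp add: algebra_simps)
    then show "x \<in> lattice lam mu" unfolding lattice_def by blast
  qed
  then show ?thesis unfolding sec_space_def by blast
qed

subsection \<open>Roots of unity and the discrete Fourier transform on Z/DZ\<close>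

definition unit_root :: "nat \<Rightarrow> int \<Rightarrow> complex" where
  "unit_root N i = exp (2 * \<i> * of_real pi * of_int i / of_nat N)"

lemma unit_root_eq_iff:
  assumes N: "N > 0"
  shows "unit_root N a = unit_root N b \<longleftrightarrow> int N dvd a - b"
proof
  assume "unit_root N a = unit_root N b"
  then obtain n :: int where n: "2 * \<i> * of_real pi * of_int a / of_nat N
      = 2 * \<i> * of_real pi * of_int b / of_nat N + (of_int (2 * n) * pi) * \<i>"
    unfolding unit_root_def exp_eq by blast
  have conv: "2 * \<i> * of_real pi * of_int x / of_nat N = complex_of_real (2 * pi * x / N) * \<i>"
    for x :: int by simp
  have "complex_of_real (2 * pi * a / N) * \<i> = complex_of_real (2 * pi * b / N + 2 * n * pi) * \<i>"
    using n unfolding conv by (simp add: distrib_right)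
  then have "2 * pi * a / N = 2 * pi * b / N + 2 * n * pi"
    by (metis complex_i_not_zero mult_cancel_right of_real_eq_iff)
  then have "pi * (2 * real_of_int a) = pi * (2 * (b + n * N))"
    using N by (simp add: field_simps)
  then have "real_of_int a = real_of_int (b + n * int N)" by simp
  then show "int N dvd a - b" by (simp only: of_int_eq_iff) simp
next
  assume "int N dvd a - b"
  then obtain m where "a = b + int N * m" by (metis dvdE add.commute diff_add_cancel)
  then have "2 * \<i> * of_real pi * of_int a / of_nat N
      = 2 * \<i> * of_real pi * of_int b / of_nat N + \<i> * (of_int m * (of_real pi * 2))"
    using N by (simp add: field_simps)
  then show "unit_root N a = unit_root N b" by (simp add: unit_root_def)
qed

lemma unit_root_nonzero: "unit_root N i \<noteq> 0"
  by (simp add: unit_root_def)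

lemma unit_root_neg: "inverse (unit_root N i) = unit_root N (- i)"
  by (simp add: unit_root_def exp_minus[symmetric])

lemma unit_root_add: "unit_root N x * unit_root N y = unit_root N (x + y)"
  by (simp add: unit_root_def exp_add[symmetric] add_divide_distrib distrib_left)

lemma unit_root_pow: "unit_root N (int m * j) = unit_root N j ^ m"
proof -
  have "unit_root N j ^ m = exp (of_nat m * (2 * \<i> * of_real pi * of_int j / of_nat N))"
    unfolding unit_root_def by (rule exp_of_nat_mult[symmetric])
  also have "of_nat m * (2 * \<i> * of_real pi * of_int j / of_nat N)
      = 2 * \<i> * of_real pi * of_int (int m * j) / of_nat N"
    by simp
  finally show ?thesis by (simp add: unit_root_def)
qed

lemma unit_root_geom:
  assumes D: "D > 0"
  shows "(\<Sum>m\<in>{0..<int D}. unit_root D (m * j)) = (if int D dvd j then of_nat D else 0)"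
proof -
  have s: "(\<Sum>m\<in>{0..<int D}. unit_root D (m * j)) = (\<Sum>m<D. unit_root D j ^ m)"
    using sum.atLeast_int_lessThan_int_shift[of "\<lambda>m. unit_root D (m * j)" 0 D]
    by (simp add: unit_root_pow lessThan_atLeast0)
  have r1: "unit_root D j = 1 \<longleftrightarrow> int D dvd j"
    using unit_root_eq_iff[OF D, of j 0] by (simp add: unit_root_def)
  have "unit_root D j ^ D = 1"
    using unit_root_pow[of D D j] unit_root_eq_iff[OF D, of "int D * j" 0] by (simp add: unit_root_def)
  then show ?thesis using s r1 by (simp add: sum_gp_strict)
qed

definition dft :: "nat \<Rightarrow> (int \<Rightarrow> complex) \<Rightarrow> int \<Rightarrow> complex" where
  "dft D g m = (\<Sum>l\<in>{0..<int D}. g l * unit_root D (m * l))"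

lemma dft_cong:
  assumes D: "D > 0" and "int D dvd m - m'"
  shows "dft D g m = dft D g m'"
proof -
  have "unit_root D (m * l) = unit_root D (m' * l)" for l
    using assms(2) by (simp add: unit_root_eq_iff[OF D] left_diff_distrib[symmetric])
  then show ?thesis by (simp add: dft_def)
qed

lemma dft_periodic: "D > 0 \<Longrightarrow> \<forall>m. dft D g (m + int D) = dft D g m"
  by (auto intro: dft_cong)

lemma dft_reflect:
  assumes D: "D > 0"
  shows "dft D g (- m) = dft D (\<lambda>l. g ((- l) mod int D)) m"
proof -
  have "dft D g (- m) = (\<Sum>l\<in>{0..<int D}. g ((- l) mod int D) * unit_root D (- m * ((- l) mod int D)))"
    unfolding dft_def by (rule sum_reflect[OF D])
  also have "\<dots> = dft D (\<lambda>l. g ((- l) mod int D)) m"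
  proof -
    have "int D dvd - m * ((- l) mod int D) - m * l" for l
    proof -
      have "int D dvd (- l) mod int D - (- l)" by (subst mod_eq_dvd_iff[symmetric]) simp
      then have "int D dvd - m * ((- l) mod int D - (- l))" by (rule dvd_mult)
      also have "- m * ((- l) mod int D - (- l)) = - m * ((- l) mod int D) - m * l"
        by (simp add: algebra_simps)
      finally show ?thesis .
    qed
    then have "unit_root D (- m * ((- l) mod int D)) = unit_root D (m * l)" for l
      using unit_root_eq_iff[OF D] by blast
    then show ?thesis unfolding dft_def by (intro sum.cong refl) auto
  qed
  finally show ?thesis .
qed

lemma dft_inversion:
  assumes D: "D > 0" and l0: "l0 \<in> {0..<int D}"
  shows "(\<Sum>m\<in>{0..<int D}. dft D g m * unit_root D (- (m * l0))) = of_nat D * g l0"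
proof -
  have "(\<Sum>m\<in>{0..<int D}. dft D g m * unit_root D (- (m * l0)))
      = (\<Sum>m\<in>{0..<int D}. \<Sum>l\<in>{0..<int D}. g l * unit_root D (m * (l - l0)))"
    unfolding dft_def sum_distrib_right
    by (intro sum.cong refl) (simp add: mult.assoc unit_root_add algebra_simps)
  also have "\<dots> = (\<Sum>l\<in>{0..<int D}. g l * (\<Sum>m\<in>{0..<int D}. unit_root D (m * (l - l0))))"
    by (subst sum.swap) (simp add: sum_distrib_left)
  also have "\<dots> = (\<Sum>l\<in>{0..<int D}. if l = l0 then g l0 * of_nat D else 0)"
  proof (intro sum.cong refl)
    fix l assume l: "l \<in> {0..<int D}"
    have "int D dvd (l - l0) \<longleftrightarrow> l = l0"
      using l l0 by (metis atLeastLessThan_iff dvd_0_right mod_eq_dvd_iff mod_pos_pos_trivial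
          right_minus_eq)
    then show "g l * (\<Sum>m\<in>{0..<int D}. unit_root D (m * (l - l0)))
        = (if l = l0 then g l0 * of_nat D else 0)"
      by (simp add: unit_root_geom[OF D])
  qed
  also have "\<dots> = of_nat D * g l0" using l0 by simp
  finally show ?thesis .
qed

lemma dft_injective:
  assumes D: "D > 0" and eq: "\<And>m. dft D g m = dft D h m" and l: "l \<in> {0..<int D}"
  shows "g l = h l"
  using dft_inversion[OF D l, of g] dft_inversion[OF D l, of h] eq D by simp

subsection \<open>Parity of the bases (xi_l) and (Psi_n)\<close>

text \<open>The reflection of an eigenvector of T*_x with eigenvalue unit_root N i is an eigenvector
  of T*_x with eigenvalue unit_root N (-i); eigenvalues being simple, it is proportional to e_{-i}.\<close>
lemma reflected_eigenvector:
  assumes onb: "onb_family V (sec_inner u v) N e" and om: "omg u v \<noteq> 0"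
    and Vc: "\<forall>f\<in>V. continuous_on UNIV f" and N: "N > 0"
    and Vpar: "\<forall>f\<in>V. (\<lambda>z. f (- z)) \<in> V"
    and eig: "\<forall>i. Tstar k x (e i) = (\<lambda>z. unit_root N i * e i z)"
  shows "\<exists>c. (\<lambda>z. e i (- z)) = (\<lambda>z. c * e (- i) z)"
proof -
  have per: "\<forall>i. e (i + int N) = e i" and ein: "\<forall>i. e i \<in> V"
    and span: "\<forall>f\<in>V. \<exists>c. f = (\<lambda>z. \<Sum>i\<in>{0..<int N}. c i * e i z)"
    using onb by (auto simp: onb_family_def)
  obtain d where d: "(\<lambda>z. e i (- z)) = (\<lambda>z. \<Sum>j\<in>{0..<int N}. d j * e j z)"
    using span Vpar ein by blast
  have "Tstar k (- x) (e i) = (\<lambda>z. unit_root N (- i) * e i z)"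
    using Tstar_eigen_inv[of k x "e i" "unit_root N i"] eig unit_root_nonzero unit_root_neg by simp
  then have "(\<lambda>z. unit_root N (- i) * e i (- z)) = Tstar k x (\<lambda>z. e i (- z))"
    by (simp add: Tstar_reflect)
  also have "\<dots> = (\<lambda>z. \<Sum>j\<in>{0..<int N}. (d j * unit_root N j) * e j z)"
    unfolding d Tstar_sum using eig by (simp add: mult.assoc)
  finally have eq: "(\<lambda>z. \<Sum>j\<in>{0..<int N}. (d j * unit_root N j) * e j z)
      = (\<lambda>z. \<Sum>j\<in>{0..<int N}. (unit_root N (- i) * d j) * e j z)"
    using d by (simp add: sum_distrib_left mult.assoc fun_eq_iff)
  have coef: "d j * unit_root N j = unit_root N (- i) * d j" if "j \<in> {0..<int N}" for j
    by (rule onb_unique[OF onb om Vc eq that])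
  define j0 where "j0 = (- i) mod int N"
  have dz: "d j = 0" if "j \<in> {0..<int N}" "j \<noteq> j0" for j
  proof (rule ccontr)
    assume "d j \<noteq> 0"
    then have "unit_root N j = unit_root N (- i)" using coef[OF that(1)] by (simp add: mult.commute)
    then have "j mod int N = (- i) mod int N" by (simp add: unit_root_eq_iff[OF N] mod_eq_dvd_iff)
    then show False using that by (simp add: j0_def)
  qed
  have "(\<lambda>z. \<Sum>j\<in>{0..<int N}. d j * e j z)
      = (\<lambda>z. \<Sum>j\<in>{0..<int N}. if j = j0 then d j0 * e j0 z else 0)"
    using dz by (intro ext sum.cong) auto
  also have "\<dots> = (\<lambda>z. d j0 * e (- i) z)"
    using N by (simp add: j0_def periodic_mod[OF per])
  finally show ?thesis using d by auto
qed

text \<open>A basis of eigenvectors of T*_x, cyclically shifted by T*_y and with e_0(0) \<noteq> 0,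
  satisfies e_i(-z) = e_{-i}(z): the proportionality constants are invariant under the shift
  and equal 1 at i = 0.\<close>
lemma parity_basis:
  assumes onb: "onb_family V (sec_inner u v) N e" and om: "omg u v \<noteq> 0"
    and Vc: "\<forall>f\<in>V. continuous_on UNIV f" and N: "N > 0"
    and Vpar: "\<forall>f\<in>V. (\<lambda>z. f (- z)) \<in> V"
    and eig: "\<forall>i. Tstar k x (e i) = (\<lambda>z. unit_root N i * e i z)"
    and shift: "\<forall>i. Tstar k y (e i) = e (i - 1)"
    and nz: "e 0 0 \<noteq> 0"
  shows "(\<lambda>z. e i (- z)) = e (- i)"
proof -
  define c where "c i = (SOME c. (\<lambda>z. e i (- z)) = (\<lambda>z. c * e (- i) z))" for i
  have c: "(\<lambda>z. e i (- z)) = (\<lambda>z. c i * e (- i) z)" for i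
    unfolding c_def by (rule someI_ex[OF reflected_eigenvector[OF onb om Vc N Vpar eig]])
  have c_step: "c (i + 1) = c i" for i
  proof -
    have "Tstar k (- y) (e i) = e (i + 1)"
      using Tstar_inv'[of k y "e (i + 1)"] shift by simp
    then have "(\<lambda>z. c (i + 1) * e (- i - 1) z) = Tstar k y (\<lambda>z. e i (- z))"
      using c[of "i + 1"] by (simp add: Tstar_reflect)
    also have "\<dots> = (\<lambda>z. c i * e (- i - 1) z)"
      using shift by (simp add: c[of i] Tstar_scale)
    finally have eq: "(\<lambda>z. c (i + 1) * e (- i - 1) z) = (\<lambda>z. c i * e (- i - 1) z)" .
    obtain z where "e (- i - 1) z \<noteq> 0" using onb_nonzero[OF onb N, of "- i - 1"] by auto
    then show ?thesis using fun_cong[OF eq, of z] by simp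
  qed
  have "c i = c 0"
  proof (induction i rule: int_induct[where k=0])
    case (step1 i) then show ?case using c_step[of i] by simp
  next
    case (step2 i) then show ?case using c_step[of "i - 1"] by simp
  qed simp
  moreover have "c 0 = 1" using fun_cong[OF c[of 0], of 0] nz by simp
  ultimately show ?thesis using c[of i] by simp
qed

lemma xi_parity:
  assumes k: "k > 0" and xb: "xi_basis lam mu Om k \<xi>" and om: "omg mu lam = 4 * pi"
    and Om: "Om \<noteq> 0"
  shows "(\<lambda>z. \<xi> l (- z)) = \<xi> (- l)"
proof (rule parity_basis)
  show "onb_family (sec_space k lam mu) (sec_inner lam mu) (2 * k) \<xi>"
    using xb by (simp add: xi_basis_def)
  show "omg lam mu \<noteq> 0" using om by (simp add: omg_antisym[of lam mu])
  show "\<forall>i. Tstar k (mu / of_nat (2 * k)) (\<xi> i) = (\<lambda>z. unit_root (2 * k) i * \<xi> i z)"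
    using xb by (simp add: xi_basis_def unit_root_def field_simps)
  show "\<forall>i. Tstar k (- lam / of_nat (2 * k)) (\<xi> i) = \<xi> (i - 1)"
    using xb by (simp add: xi_basis_def)
  show "\<xi> 0 0 \<noteq> 0" using xb Om by (auto simp: xi_basis_def)
qed (use k sec_space_cont sec_space_reflect in auto)

lemma psi_parity:
  assumes k: "k > 0" and D: "D > 0" and pb: "psi_basis D lam mu k \<Psi>"
    and om: "omg mu lam = 4 * pi" and nz: "\<Psi> 0 0 \<noteq> 0"
  shows "(\<lambda>z. \<Psi> n (- z)) = \<Psi> (- n)"
proof (rule parity_basis)
  show "onb_family (sec_space k (of_nat D * mu) lam) (sec_inner (of_nat D * mu) lam) (2 * k * D) \<Psi>"
    using pb by (simp add: psi_basis_def)
  show "omg (of_nat D * mu) lam \<noteq> 0" using om D by (simp add: omg_of_nat_left)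
  show "\<forall>i. Tstar k (- lam / of_nat (2 * k * D)) (\<Psi> i) = (\<lambda>z. unit_root (2 * k * D) i * \<Psi> i z)"
    using pb by (simp add: psi_basis_def unit_root_def field_simps)
  define R where "R = (of_nat D * mu - 2 * lam) / of_nat (2 * k * D)"
  show "\<forall>i. Tstar k (- R) (\<Psi> i) = \<Psi> (i - 1)"
  proof
    fix i
    have "Tstar k R (\<Psi> (i - 1)) = \<Psi> i" using pb by (simp add: psi_basis_def R_def)
    then show "Tstar k (- R) (\<Psi> i) = \<Psi> (i - 1)" using Tstar_inv'[of k R "\<Psi> (i - 1)"] by simp
  qed
qed (use k D nz sec_space_cont sec_space_reflect in auto)

subsection \<open>Coordinates of the knot state and of the combinations of the Phi_l\<close>

lemma odd_vector_coeffs: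
  assumes onb: "onb_family V (sec_inner u v) N e" and om: "omg u v \<noteq> 0"
    and Vc: "\<forall>f\<in>V. continuous_on UNIV f" and N: "N > 0"
    and par: "\<And>n. (\<lambda>z. e n (- z)) = e (- n)"
    and Z: "Z = (\<lambda>z. \<Sum>n\<in>{0..<int N}. c n * e n z)"
    and odd: "\<And>z. Z (- z) = - Z z"
  shows "c ((- n) mod int N) = - c (n mod int N)"
proof -
  have per: "\<forall>n. e (n + int N) = e n" using onb by (simp add: onb_family_def)
  have eq: "(\<lambda>z. \<Sum>n\<in>{0..<int N}. c ((- n) mod int N) * e n z)
      = (\<lambda>z. \<Sum>n\<in>{0..<int N}. (- c n) * e n z)"
  proof
    fix z
    define g where "g n = c n * e (- n) z" for n
    have "(\<Sum>n\<in>{0..<int N}. c ((- n) mod int N) * e n z) = (\<Sum>n\<in>{0..<int N}. g ((- n) mod int N))"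
    proof (rule sum.cong[OF refl])
      fix n assume n: "n \<in> {0..<int N}"
      have "e (- ((- n) mod int N)) = e ((- ((- n) mod int N)) mod int N)"
        by (rule periodic_mod[OF per, symmetric])
      also have "(- ((- n) mod int N)) mod int N = n" using n by (simp add: mod_minus_eq)
      finally show "c ((- n) mod int N) * e n z = g ((- n) mod int N)" by (simp add: g_def)
    qed
    also have "\<dots> = (\<Sum>n\<in>{0..<int N}. g n)" by (rule sum_reflect[OF N, symmetric])
    also have "\<dots> = (\<Sum>n\<in>{0..<int N}. c n * e n (- z))"
      unfolding g_def using par by (simp add: fun_eq_iff)
    also have "\<dots> = - Z z" using Z odd[of z] by simp
    finally show "(\<Sum>n\<in>{0..<int N}. c ((- n) mod int N) * e n z) = (\<Sum>n\<in>{0..<int N}. (- c n) * e n z)"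
      using Z by (simp add: sum_negf)
  qed
  have "c ((- (n mod int N)) mod int N) = - c (n mod int N)"
    using onb_unique[OF onb om Vc eq, of "n mod int N"] N by simp
  then show ?thesis by (simp add: mod_minus_eq)
qed

lemma Phi_expansion:
  "(\<lambda>z. \<Sum>l\<in>{0..<int D}. g l * Phi D k \<Psi> l z)
   = (\<lambda>z. \<Sum>n\<in>{0..<int (2 * k * D)}.
           dft D g n / complex_of_real (sqrt (real (2 * k * D))) * \<Psi> n z)"
proof
  fix z
  define s where "s = complex_of_real (sqrt (real (2 * k * D)))"
  have root: "exp (2 * \<i> * of_real pi * of_int n * of_int l / of_nat D) = unit_root D (n * l)" for n l
    by (simp add: unit_root_def mult.assoc)
  have "(\<Sum>l\<in>{0..<int D}. g l * Phi D k \<Psi> l z)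
      = (\<Sum>l\<in>{0..<int D}. \<Sum>n\<in>{0..<int (2 * k * D)}. g l * (unit_root D (n * l) * \<Psi> n z / s))"
    unfolding Phi_def root s_def by (simp add: sum_distrib_left)
  also have "\<dots> = (\<Sum>n\<in>{0..<int (2 * k * D)}. dft D g n / s * \<Psi> n z)"
    by (subst sum.swap) (simp add: dft_def sum_distrib_left sum_distrib_right sum_divide_distrib mult_ac)
  finally show "(\<Sum>l\<in>{0..<int D}. g l * Phi D k \<Psi> l z)
      = (\<Sum>n\<in>{0..<int (2 * k * D)}. dft D g n / s * \<Psi> n z)" .
qed

lemma gamma_window:
  fixes D k :: nat
  assumes pb: "psi_basis D lam mu k \<Psi>" and om: "omg (of_nat D * mu) lam \<noteq> 0"
    and D: "D > 0" and k: "k > 0"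
    and Z: "Z = (\<lambda>z. \<Sum>n\<in>{0..<int (2 * k * D)}. c n * \<Psi> n z)"
    and gc: "gamma_cond D lam mu k Z \<Psi> lo hi g" and n: "lo \<le> n" "n < hi"
  shows "complex_of_real (sqrt (real (2 * k * D))) * c (n mod int (2 * k * D)) = dft D g n"
proof -
  define N where "N = 2 * k * D"
  define s where "s = complex_of_real (sqrt (real N))"
  have N: "N > 0" and s: "s \<noteq> 0" using D k by (simp_all add: N_def s_def)
  have onb: "onb_family (sec_space k (of_nat D * mu) lam) (sec_inner (of_nat D * mu) lam) N \<Psi>"
    using pb by (simp add: psi_basis_def N_def)
  have per: "\<forall>n. \<Psi> (n + int N) = \<Psi> n" using onb by (simp add: onb_family_def)
  have diff: "(\<lambda>z. Z z - (\<Sum>l\<in>{0..<int D}. g l * Phi D k \<Psi> l z))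
      = (\<lambda>z. \<Sum>m\<in>{0..<int N}. (c m - dft D g m / s) * \<Psi> m z)"
  proof
    fix z
    show "Z z - (\<Sum>l\<in>{0..<int D}. g l * Phi D k \<Psi> l z)
        = (\<Sum>m\<in>{0..<int N}. (c m - dft D g m / s) * \<Psi> m z)"
      using fun_cong[OF Phi_expansion[where D=D and g=g and k=k and \<Psi>=\<Psi>], of z] unfolding Z N_def s_def
      by (simp add: sum_subtractf left_diff_distrib)
  qed
  have "0 = sec_inner (of_nat D * mu) lam (\<lambda>z. Z z - (\<Sum>l\<in>{0..<int D}. g l * Phi D k \<Psi> l z)) (\<Psi> n)"
    using gc n by (simp add: gamma_cond_def)
  also have "\<dots> = c (n mod int N) - dft D g (n mod int N) / s"
    unfolding diff periodic_mod[OF per, of n, symmetric]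
    using N by (intro onb_coeff[OF onb om]) (auto simp: sec_space_cont)
  also have "dft D g (n mod int N) = dft D g n"
  proof (rule dft_cong[OF D])
    have "n mod int N - n = int D * (- (2 * int k) * (n div int N))"
      by (simp add: N_def minus_div_mult_eq_mod[symmetric] algebra_simps)
    then show "int D dvd n mod int N - n" by simp
  qed
  finally show ?thesis using s by (simp add: N_def s_def field_simps)
qed

lemma window_reflection:
  fixes C P M :: "int \<Rightarrow> complex" and D :: nat
  assumes D: "D > 0" and perP: "\<forall>n. P (n + int D) = P n" and perM: "\<forall>n. M (n + int D) = M n"
    and odd: "\<And>n. C (- n) = - C n"
    and plus: "\<And>n. lo \<le> n \<Longrightarrow> n < hi \<Longrightarrow> C n = P n"
    and minus: "\<And>n. lo' \<le> n \<Longrightarrow> n < hi' \<Longrightarrow> C n = M n"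
    and overlap: "lo' \<le> start" "- hi < start" "start + int D \<le> hi'" "start + int D \<le> 1 - lo"
  shows "M n = - P (- n)"
proof (rule periodic_eq_from_window[of "int D" M "\<lambda>n. - P (- n)" start])
  show "\<forall>n. - P (- (n + int D)) = - P (- n)"
    using perP by (metis add.commute diff_add_cancel minus_add_distrib uminus_add_conv_diff)
next
  fix n assume n: "start \<le> n" "n < start + int D"
  have "M n = C n" by (rule minus[symmetric]) (use overlap n in linarith)+
  also have "\<dots> = - C (- n)" using odd[of n] by simp
  also have "C (- n) = P (- n)" by (rule plus) (use overlap n in linarith)+
  finally show "M n = - P (- n)" .
qed (use D perM in auto)

lemma coeffs_of_reflected_dft:
  assumes D: "D > 0" and rel: "\<And>n. dft D gm n = - dft D gp (- n)" and l: "l \<in> {0..<int D}"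
  shows "gm ((- l) mod int D) = - gp l"
proof (rule dft_injective[OF D _ l, of "\<lambda>l. gm ((- l) mod int D)" "\<lambda>l. - gp l", simplified])
  fix n
  have "dft D (\<lambda>l. gm ((- l) mod int D)) n = dft D gm (- n)" by (simp add: dft_reflect[OF D])
  also have "\<dots> = - dft D gp n" using rel[of "- n"] by simp
  also have "\<dots> = dft D (\<lambda>l. - gp l) n" by (simp add: dft_def sum_negf)
  finally show "dft D (\<lambda>l. gm ((- l) mod int D)) n = dft D (\<lambda>l. - gp l) n" .
qed

subsection \<open>The reflection symmetry of gamma for a fixed large k\<close>

text \<open>The knot state is odd and lies in H_k, which is contained in H_{D,k}; hence its
  coordinates in the basis (Psi_n) exist and are odd in n.\<close>
lemma knot_state_odd_coordinates:
  fixes a b k D :: nat and lam mu Om :: complex and \<xi> \<Psi> :: "int \<Rightarrow> complex \<Rightarrow> complex"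
  assumes k: "k > 0" and D: "D > 0" and cop: "coprime a b"
    and om: "omg mu lam = 4 * pi" and Om: "Om \<noteq> 0"
    and xb: "xi_basis lam mu Om k \<xi>" and pb: "psi_basis D lam mu k \<Psi>" and nz: "\<Psi> 0 0 \<noteq> 0"
  shows "\<exists>c. knot_state a b k \<xi> = (\<lambda>z. \<Sum>n\<in>{0..<int (2 * k * D)}. c n * \<Psi> n z)
           \<and> (\<forall>n. c ((- n) mod int (2 * k * D)) = - c (n mod int (2 * k * D)))"
proof -
  define N where "N = 2 * k * D"
  define Z where "Z = knot_state a b k \<xi>"
  have N: "N > 0" using k D by (simp add: N_def)
  have onbX: "onb_family (sec_space k lam mu) (sec_inner lam mu) (2 * k) \<xi>"
    using xb by (simp add: xi_basis_def)
  have onbP: "onb_family (sec_space k (of_nat D * mu) lam) (sec_inner (of_nat D * mu) lam) N \<Psi>"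
    using pb by (simp add: psi_basis_def N_def)
  have omP: "omg (of_nat D * mu) lam \<noteq> 0" using om D by (simp add: omg_of_nat_left)
  have Z_odd: "Z (- z) = - Z z" for z
    unfolding Z_def using xi_parity[OF k xb om Om] onbX
    by (intro knot_state_odd[OF k cop]) (auto simp: onb_family_def)
  define x where "x l = complex_of_real (sin (pi / real k) / sqrt (real k))
      * jones a b l (- exp (\<i> * of_real pi / of_nat (2 * k)))" for l
  have "Z = (\<lambda>z. \<Sum>l\<in>{0..<2 * int k}. x l * \<xi> l z)"
    by (simp add: Z_def knot_state_def x_def sum_distrib_left mult.assoc fun_eq_iff)
  moreover have "\<exists>d. \<xi> l = (\<lambda>z. \<Sum>n\<in>{0..<int N}. d n * \<Psi> n z)" for l
    using onbX onbP sec_space_sub[of k lam mu D] unfolding onb_family_def by blast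
  then have "\<exists>c. (\<lambda>z. \<Sum>l\<in>{0..<2 * int k}. x l * \<xi> l z) = (\<lambda>z. \<Sum>n\<in>{0..<int N}. c n * \<Psi> n z)"
    by (rule expansion_of_combination)
  ultimately obtain c where Zc: "Z = (\<lambda>z. \<Sum>n\<in>{0..<int N}. c n * \<Psi> n z)" by auto
  moreover have "c ((- n) mod int N) = - c (n mod int N)" for n
    using odd_vector_coeffs[OF onbP omP _ N psi_parity[OF k D pb om nz] Zc Z_odd]
    by (auto simp: sec_space_cont)
  ultimately show ?thesis unfolding Z_def N_def by blast
qed

text \<open>For fixed k \<ge> 2ab + a + b + 1 the windows of E_{k,+} and E_{k,-} are long enough, and
  the coordinates of Z on them are the Fourier transforms of gamma^+ and gamma^-.\<close>
lemma gamma_reflection_fixed_k: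
  fixes a b k D :: nat and lam mu Om :: complex and \<xi> \<Psi> :: "int \<Rightarrow> complex \<Rightarrow> complex"
    and gp gm :: "int \<Rightarrow> complex"
  assumes ab: "0 < a" "0 < b" and cop: "coprime a b" and D: "D = 2 * a * b"
    and om: "omg mu lam = 4 * pi" and Om: "Om \<noteq> 0"
    and xb: "xi_basis lam mu Om k \<xi>" and pb: "psi_basis D lam mu k \<Psi>"
    and nz: "\<Psi> 0 0 \<noteq> 0" and kb: "k \<ge> 2 * a * b + a + b + 1"
    and gpc: "gamma_cond D lam mu k (knot_state a b k \<xi>) \<Psi>
              (- int (a * b) + int a + int b) (2 * int k - int (a * b) - int a - int b) gp"
    and gmc: "gamma_cond D lam mu k (knot_state a b k \<xi>) \<Psi>
              (- 2 * int k - int (a * b) + int a + int b) (- int (a * b) - int a - int b) gm"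
    and l: "l \<in> {0..<int D}"
  shows "gm ((- l) mod int D) = - gp l"
proof -
  define N where "N = 2 * k * D"
  have k: "k > 0" and D0: "D > 0" using kb ab by (simp_all add: D)
  have omP: "omg (of_nat D * mu) lam \<noteq> 0" using om D0 by (simp add: omg_of_nat_left)
  obtain c where Zc: "knot_state a b k \<xi> = (\<lambda>z. \<Sum>n\<in>{0..<int N}. c n * \<Psi> n z)"
      and c_odd: "\<And>n. c ((- n) mod int N) = - c (n mod int N)"
    using knot_state_odd_coordinates[OF k D0 cop om Om xb pb nz] unfolding N_def by blast
  define C where "C n = complex_of_real (sqrt (real N)) * c (n mod int N)" for n
  have window: "C n = dft D g n"
    if "gamma_cond D lam mu k (knot_state a b k \<xi>) \<Psi> lo hi g" "lo \<le> n" "n < hi" for g lo hi n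
    unfolding C_def N_def using gamma_window[OF pb omP D0 k Zc[unfolded N_def] that] .
  have kbi: "int k \<ge> 2 * int (a * b) + int a + int b + 1" using kb by linarith
  have Dint: "int D = 2 * int (a * b)" by (simp add: D)
  have "dft D gm n = - dft D gp (- n)" for n
  proof (rule window_reflection[OF D0 dft_periodic[OF D0] dft_periodic[OF D0],
        where start = "- 2 * int k + int (a * b) + int a + int b + 1"])
    show "C (- n) = - C n" for n by (simp add: C_def c_odd)
    show "C n = dft D gp n" if "- int (a * b) + int a + int b \<le> n"
        "n < 2 * int k - int (a * b) - int a - int b" for n
      using window[OF gpc that] .
    show "C n = dft D gm n" if "- 2 * int k - int (a * b) + int a + int b \<le> n"
        "n < - int (a * b) - int a - int b" for n
      using window[OF gmc that] .
  qed (use kbi Dint in \<open>linarith+\<close>)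
  then show ?thesis using coeffs_of_reflected_dft[OF D0 _ l] by blast
qed

lemma eventually_nonzero_of_asymptotics:
  fixes Om :: complex and P :: "nat \<Rightarrow> complex"
  assumes Om: "Om \<noteq> 0"
    and asym: "neg_k_infty (\<lambda>k. P k - exp (\<i> * of_real pi / 4)
                 * complex_of_real ((real k / (2 * pi)) powr (1/4)) * Om)"
  shows "\<exists>K. \<forall>k\<ge>K. P k \<noteq> 0"
proof -
  define A where "A k = exp (\<i> * of_real pi / 4) * complex_of_real ((real k / (2 * pi)) powr (1/4)) * Om"
    for k :: nat
  obtain C K0 where CK: "\<forall>k\<ge>K0. norm (P k - A k) \<le> C * real k powr (- real (1::nat))"
    using asym unfolding neg_k_infty_def A_def by blast
  have "P k \<noteq> 0" if k: "k \<ge> max K0 (max 8 (nat \<lceil>C / norm Om\<rceil> + 1))" for k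
  proof
    assume P0: "P k = 0"
    have k8: "real k \<ge> 8" and kC: "real k > C / norm Om" using k by linarith+
    then have "real k / (2 * pi) \<ge> 1" using pi_less_4 by (simp add: field_simps)
    then have "(real k / (2 * pi)) powr (1/4) \<ge> 1" by (rule ge_one_powr_ge_zero) simp
    moreover have "norm (exp (\<i> * of_real pi / 4)) = 1"
      by (metis exp_of_real mult.commute norm_exp_i_times of_real_divide of_real_numeral
          times_divide_eq_right)
    ultimately have "norm Om \<le> norm (A k)"
      by (simp add: A_def norm_mult mult_le_cancel_right1)
    also have "\<dots> \<le> C / real k"
      using CK[rule_format, of k] k P0 by (simp add: powr_minus divide_inverse)
    finally have "norm Om * real k \<le> C" using k8 by (simp add: field_simps)
    moreover have "C < norm Om * real k" using kC Om k8 by (simp add: field_simps)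
    ultimately show False by linarith
  qed
  then show ?thesis by blast
qed

theorem mainTheorem10:
  fixes a b :: nat and lam mu Om_mu Om_lam :: complex
    and \<xi> \<Psi> :: "nat \<Rightarrow> int \<Rightarrow> complex \<Rightarrow> complex"
  assumes "0 < a" and "0 < b" and "coprime a b"
    and "omg mu lam = 4 * pi"
    and "is_Omega mu Om_mu"
    and "\<forall>k>0. xi_basis lam mu Om_mu k (\<xi> k)"
    and "is_Omega lam Om_lam"
    and "neg_k_infty (\<lambda>k. knot_state0 k (\<xi> k) 0
           - exp (3 * \<i> * of_real pi / 4) / complex_of_real (sqrt 2)
             * complex_of_real ((real k / (2 * pi)) powr (1/4)) * Om_lam)"
    and "\<forall>k>0. psi_basis (2 * a * b) lam mu k (\<Psi> k)"
    and "neg_k_infty (\<lambda>k. \<Psi> k 0 0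
           - exp (\<i> * of_real pi / 4) * complex_of_real ((real k / (2 * pi)) powr (1/4)) * Om_lam)"
  shows "\<exists>K. \<forall>k\<ge>K. \<forall>gp gm.
           gamma_cond (2 * a * b) lam mu k (knot_state a b k (\<xi> k)) (\<Psi> k)
              (- int (a * b) + int a + int b) (2 * int k - int (a * b) - int a - int b) gp
         \<and> gamma_cond (2 * a * b) lam mu k (knot_state a b k (\<xi> k)) (\<Psi> k)
              (- 2 * int k - int (a * b) + int a + int b) (- int (a * b) - int a - int b) gm
         \<longrightarrow> (\<forall>l\<in>{0..<int (2 * a * b)}. gm ((- l) mod int (2 * a * b)) = - gp l)"
proof -
  have Om_mu: "Om_mu \<noteq> 0" and Om_lam: "Om_lam \<noteq> 0"
    using assms(5,7) by (auto simp: is_Omega_def)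
  obtain K1 where K1: "\<forall>k\<ge>K1. \<Psi> k 0 0 \<noteq> 0"
    using eventually_nonzero_of_asymptotics[OF Om_lam assms(10)] by blast
  have "gm ((- l) mod int (2 * a * b)) = - gp l"
    if "k \<ge> max K1 (2 * a * b + a + b + 1)" and "l \<in> {0..<int (2 * a * b)}"
      and "gamma_cond (2 * a * b) lam mu k (knot_state a b k (\<xi> k)) (\<Psi> k)
              (- int (a * b) + int a + int b) (2 * int k - int (a * b) - int a - int b) gp"
      and "gamma_cond (2 * a * b) lam mu k (knot_state a b k (\<xi> k)) (\<Psi> k)
              (- 2 * int k - int (a * b) + int a + int b) (- int (a * b) - int a - int b) gm"
    for k l gp gm
    using that assms(6,9) K1
    by (intro gamma_reflection_fixed_k[OF assms(1-3) refl assms(4) Om_mu]) auto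
  then show ?thesis by blast
qed

end
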